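(* For every uncountable set $\Gamma$, the Banach space $\ell_1(\Gamma)$ does not contain any overcomplete set.
   Context: A subset $S$ of a Banach space $X$ with $|S| = \operatorname{dens} X$ (density character) is called overcomplete if every subset $\Lambda \subseteq S$ with $|\Lambda| = |S|$ is linearly dense in $X$. *)

theory Defs
  imports "HOL-Analysis.Analysis"
begin

definition l1_space :: "'a set \<Rightarrow> ('a \<Rightarrow> real) set" where
  "l1_space \<Gamma> = {f. (\<forall>x. x \<notin> \<Gamma> \<longrightarrow> f x = 0) \<and> (\<lambda>x. \<bar>f x\<bar>) summable_on \<Gamma>}"

definition l1_norm :: "'a set \<Rightarrow> ('a \<Rightarrow> real) \<Rightarrow> real" where
  "l1_norm \<Gamma> f = (\<Sum>\<^sub>\<infinity>x\<in>\<Gamma>. \<bar>f x\<bar>)"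

definition l1_dist :: "'a set \<Rightarrow> ('a \<Rightarrow> real) \<Rightarrow> ('a \<Rightarrow> real) \<Rightarrow> real" where
  "l1_dist \<Gamma> f g = l1_norm \<Gamma> (\<lambda>x. f x - g x)"

definition dense_wrt :: "'v set \<Rightarrow> ('v \<Rightarrow> 'v \<Rightarrow> real) \<Rightarrow> 'v set \<Rightarrow> bool" where
  "dense_wrt X d D \<longleftrightarrow> D \<subseteq> X \<and> (\<forall>f\<in>X. \<forall>e>0. \<exists>g\<in>D. d f g < e)"

text \<open>|S| equals the density character of X, i.e. the least cardinality of a dense subset.\<close>
definition card_eq_dens :: "'v set \<Rightarrow> ('v \<Rightarrow> 'v \<Rightarrow> real) \<Rightarrow> 'w set \<Rightarrow> bool" where
  "card_eq_dens X d S \<longleftrightarrow>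
     (\<exists>D. dense_wrt X d D \<and> (card_of S, card_of D) \<in> ordIso) \<and>
     (\<forall>D. dense_wrt X d D \<longrightarrow> (card_of S, card_of D) \<in> ordLeq)"

definition lin_span :: "('a \<Rightarrow> real) set \<Rightarrow> ('a \<Rightarrow> real) set" where
  "lin_span A = {f. \<exists>F c. finite F \<and> F \<subseteq> A \<and> f = (\<lambda>x. \<Sum>v\<in>F. c v * v x)}"

definition linearly_dense :: "('a \<Rightarrow> real) set \<Rightarrow> (('a \<Rightarrow> real) \<Rightarrow> ('a \<Rightarrow> real) \<Rightarrow> real)
    \<Rightarrow> ('a \<Rightarrow> real) set \<Rightarrow> bool" where
  "linearly_dense X d A \<longleftrightarrow> dense_wrt X d (lin_span A)"

definition overcomplete :: "('a \<Rightarrow> real) set \<Rightarrow> (('a \<Rightarrow> real) \<Rightarrow> ('a \<Rightarrow> real) \<Rightarrow> real)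
    \<Rightarrow> ('a \<Rightarrow> real) set \<Rightarrow> bool" where
  "overcomplete X d S \<longleftrightarrow> S \<subseteq> X \<and> card_eq_dens X d S \<and>
     (\<forall>\<Lambda>. \<Lambda> \<subseteq> S \<and> (card_of \<Lambda>, card_of S) \<in> ordIso \<longrightarrow> linearly_dense X d \<Lambda>)"

end

(*
  Every element of l1(Gamma) has countable support, and the rational finitely supported
  functions show that dens l1(Gamma) <= |Gamma|; so an overcomplete S has |S| <= |Gamma|,
  and it suffices to find a subset of S of cardinality |S| that is not linearly dense.

  Suppose the elements g of Lambda carry pairwise disjoint blocks B_g, avoiding gamma, such
  that t |g gamma| plus the mass of g on all other blocks is at most its mass on B_g. Then a
  finite combination h has mass at least t |h gamma| on the blocks, hence
  ||e_gamma - h|| >= |1 - h gamma| + t |h gamma| >= t, and Lambda is not linearly dense.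
  The degenerate case is a set of functions with a common zero gamma.

  If |S| < |Gamma|, some coordinate lies outside all supports. If |S| = |Gamma| and |S| many
  elements of S vanish at one point, they form the subset. Otherwise a counting argument
  shows that S is not a countable union of smaller sets, and we look at the ratios r such
  that for every set U of fewer than |S| coordinates, |S| many g carry at least r ||g||
  outside U. If the supremum m of these ratios is 0, then |S| many elements of S are
  supported in one small set of coordinates and thus share a zero. If m > 0, take
  delta = m / 5: in a maximal (Zorn) system of blocks avoiding a small set U, where each g
  has at least 4 delta ||g|| on its own block and at most 2 delta ||g|| on the others, there
  are |S| members, because a smaller system can be extended by an element that is heavy
  outside the supports used so far but light outside U.
*)
theory Submission
  imports Defs "HOL-Library.Countable_Set_Type"
begin

unbundle cardinal_syntax


section \<open>Partial l1 norms\<close>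

definition mass :: "'a set \<Rightarrow> ('a \<Rightarrow> real) \<Rightarrow> real" where
  "mass A g = (\<Sum>\<^sub>\<infinity>x\<in>A. \<bar>g x\<bar>)"

lemma l1_space_abs_summable_on:
  assumes "g \<in> l1_space \<Gamma>"
  shows "(\<lambda>x. \<bar>g x\<bar>) summable_on A"
proof -
  have "(\<lambda>x. \<bar>g x\<bar>) summable_on UNIV"
    using assms summable_on_cong_neutral[of UNIV \<Gamma> "\<lambda>x. \<bar>g x\<bar>" "\<lambda>x. \<bar>g x\<bar>"]
    by (auto simp: l1_space_def)
  then show ?thesis
    by (rule summable_on_subset_banach) simp
qed

lemma l1_space_countable_support:
  assumes "g \<in> l1_space \<Gamma>"
  shows "countable {x. g x \<noteq> 0}"
proof -
  have "(\<lambda>x. \<bar>g x\<bar>) summable_on UNIV"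
    by (rule l1_space_abs_summable_on[OF assms])
  then have "g summable_on UNIV"
    by (subst summable_on_iff_abs_summable_on_real) simp
  then show ?thesis
    using summable_countable_real by fastforce
qed

lemma l1_space_add:
  assumes "f \<in> l1_space \<Gamma>" "g \<in> l1_space \<Gamma>"
  shows "(\<lambda>x. f x + g x) \<in> l1_space \<Gamma>"
proof -
  have "(\<lambda>x. \<bar>f x\<bar> + \<bar>g x\<bar>) summable_on \<Gamma>"
    using assms by (intro summable_on_add l1_space_abs_summable_on)
  then have "(\<lambda>x. \<bar>f x + g x\<bar>) summable_on \<Gamma>"
    by (rule summable_on_comparison_test) auto
  then show ?thesis
    using assms by (simp add: l1_space_def)
qed

lemma l1_space_cmult:
  assumes "f \<in> l1_space \<Gamma>"
  shows "(\<lambda>x. c * f x) \<in> l1_space \<Gamma>"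
  using assms summable_on_cmult_right[OF l1_space_abs_summable_on[OF assms], of "\<bar>c\<bar>"]
  by (simp add: l1_space_def abs_mult)

lemma l1_space_diff:
  assumes "f \<in> l1_space \<Gamma>" "g \<in> l1_space \<Gamma>"
  shows "(\<lambda>x. f x - g x) \<in> l1_space \<Gamma>"
  using l1_space_add[OF assms(1) l1_space_cmult[OF assms(2), of "-1"]] by simp

lemma l1_space_lin_comb:
  assumes "finite F" "F \<subseteq> l1_space \<Gamma>"
  shows "(\<lambda>x. \<Sum>v\<in>F. c v * v x) \<in> l1_space \<Gamma>"
  using assms
proof (induction F rule: finite_induct)
  case empty
  then show ?case by (simp add: l1_space_def)
next
  case (insert w F)
  then show ?case
    by (simp add: l1_space_add l1_space_cmult)
qed

lemma l1_space_indicator: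
  assumes "\<gamma> \<in> \<Gamma>"
  shows "(\<lambda>x. if x = \<gamma> then 1 else 0 :: real) \<in> l1_space \<Gamma>"
proof -
  have "(\<lambda>x. \<bar>if x = \<gamma> then 1 else 0 :: real\<bar>) summable_on \<Gamma>"
    using assms summable_on_cong_neutral[of \<Gamma> "{\<gamma>}" "\<lambda>x. \<bar>if x = \<gamma> then 1 else 0 :: real\<bar>"]
    by auto
  then show ?thesis
    using assms by (simp add: l1_space_def)
qed

lemma l1_norm_eq_mass:
  assumes "g \<in> l1_space \<Gamma>"
  shows "l1_norm \<Gamma> g = mass UNIV g"
  unfolding l1_norm_def mass_def
  by (rule infsum_cong_neutral) (use assms in \<open>auto simp: l1_space_def\<close>)

lemma mass_nonneg: "0 \<le> mass A g"
  unfolding mass_def by (rule infsum_nonneg) simp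

lemma mass_finite: "finite A \<Longrightarrow> mass A g = (\<Sum>x\<in>A. \<bar>g x\<bar>)"
  by (simp add: mass_def)

lemma mass_restrict_support: "mass A g = mass (A \<inter> {x. g x \<noteq> 0}) g"
  unfolding mass_def by (rule infsum_cong_neutral) auto

lemma mass_support_Diff: "mass ({x. g x \<noteq> 0} - V) g = mass (-V) g"
  using mass_restrict_support[of "-V" g] mass_restrict_support[of "{x. g x \<noteq> 0} - V" g]
  by (simp add: Int_commute Diff_eq)

lemma mass_mono:
  assumes "g \<in> l1_space \<Gamma>" "A \<subseteq> B"
  shows "mass A g \<le> mass B g"
  unfolding mass_def
  by (rule infsum_mono_neutral) (use assms l1_space_abs_summable_on in auto)

lemma abs_le_mass:
  assumes "g \<in> l1_space \<Gamma>" "x \<in> A"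
  shows "\<bar>g x\<bar> \<le> mass A g"
  using mass_mono[OF assms(1), of "{x}" A] assms(2) by (simp add: mass_finite)

lemma mass_le_if_finite_subsets:
  assumes "g \<in> l1_space \<Gamma>" "\<And>F. finite F \<Longrightarrow> F \<subseteq> A \<Longrightarrow> mass F g \<le> c"
  shows "mass A g \<le> c"
  unfolding mass_def
  by (rule infsum_le_finite_sums) (use assms in \<open>auto simp: l1_space_abs_summable_on mass_finite\<close>)

lemma mass_Un:
  assumes "g \<in> l1_space \<Gamma>" "A \<inter> B = {}"
  shows "mass (A \<union> B) g = mass A g + mass B g"
  unfolding mass_def
  by (rule infsum_Un_disjoint) (use assms l1_space_abs_summable_on in auto)

lemma mass_Un_vanishing:
  assumes "\<And>x. x \<in> B \<Longrightarrow> g x = 0"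
  shows "mass (A \<union> B) g = mass A g"
  unfolding mass_def by (rule infsum_cong_neutral) (use assms in auto)

lemma mass_Compl_split:
  assumes "g \<in> l1_space \<Gamma>" "U \<subseteq> V"
  shows "mass (-U) g = mass (V - U) g + mass (-V) g"
proof -
  have "-U = (V - U) \<union> -V"
    using assms(2) by blast
  then show ?thesis
    using mass_Un[OF assms(1), of "V - U" "-V"] by (simp add: Diff_eq)
qed

lemma mass_UN:
  assumes "g \<in> l1_space \<Gamma>" "finite I" "disjoint_family_on B I"
  shows "mass (\<Union>i\<in>I. B i) g = (\<Sum>i\<in>I. mass (B i) g)"
  unfolding mass_def
  by (rule sum_infsum[symmetric])
    (use assms l1_space_abs_summable_on in \<open>auto simp: disjoint_family_on_def\<close>)

lemma mass_cmult: "mass A (\<lambda>x. c * g x) = \<bar>c\<bar> * mass A g"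
  by (simp add: mass_def abs_mult infsum_cmult_right')

lemma mass_add_le:
  assumes "f \<in> l1_space \<Gamma>" "g \<in> l1_space \<Gamma>"
  shows "mass A (\<lambda>x. f x + g x) \<le> mass A f + mass A g"
proof -
  have "mass A (\<lambda>x. f x + g x) \<le> (\<Sum>\<^sub>\<infinity>x\<in>A. \<bar>f x\<bar> + \<bar>g x\<bar>)"
    unfolding mass_def using assms
    by (intro infsum_mono summable_on_add l1_space_abs_summable_on l1_space_add) auto
  also have "\<dots> = mass A f + mass A g"
    unfolding mass_def using assms by (intro infsum_add l1_space_abs_summable_on)
  finally show ?thesis .
qed

lemma mass_lin_comb_le:
  assumes "finite F" "F \<subseteq> l1_space \<Gamma>"
  shows "mass A (\<lambda>x. \<Sum>v\<in>F. c v * v x) \<le> (\<Sum>v\<in>F. \<bar>c v\<bar> * mass A v)"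
  using assms
proof (induction F rule: finite_induct)
  case empty
  then show ?case by (simp add: mass_def)
next
  case (insert w F)
  have "mass A (\<lambda>x. \<Sum>v\<in>insert w F. c v * v x) = mass A (\<lambda>x. c w * w x + (\<Sum>v\<in>F. c v * v x))"
    using insert by simp
  also have "\<dots> \<le> mass A (\<lambda>x. c w * w x) + mass A (\<lambda>x. \<Sum>v\<in>F. c v * v x)"
    using insert by (intro mass_add_le l1_space_cmult l1_space_lin_comb) auto
  finally show ?case
    using insert by (simp add: mass_cmult)
qed

lemma lin_comb_mass_ge:
  assumes "finite F" "F \<subseteq> l1_space \<Gamma>" "f \<in> F"
  shows "\<bar>c f\<bar> * mass A f - (\<Sum>g\<in>F-{f}. \<bar>c g\<bar> * mass A g) \<le> mass A (\<lambda>x. \<Sum>v\<in>F. c v * v x)"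
proof -
  let ?h = "\<lambda>x. \<Sum>v\<in>F. c v * v x" and ?r = "\<lambda>x. \<Sum>v\<in>F-{f}. c v * v x"
  have h: "?h \<in> l1_space \<Gamma>" and r: "?r \<in> l1_space \<Gamma>"
    using assms by (auto intro: l1_space_lin_comb)
  have "(\<lambda>x. c f * f x) = (\<lambda>x. ?h x + (-1) * ?r x)"
    using assms by (simp add: sum.remove)
  then have "\<bar>c f\<bar> * mass A f = mass A (\<lambda>x. ?h x + (-1) * ?r x)"
    by (metis mass_cmult)
  also have "\<dots> \<le> mass A ?h + mass A (\<lambda>x. (-1) * ?r x)"
    by (rule mass_add_le[OF h l1_space_cmult[OF r]])
  also have "mass A (\<lambda>x. (-1) * ?r x) = mass A ?r"
    using mass_cmult[of A "-1" ?r] by simp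
  also have "mass A ?r \<le> (\<Sum>g\<in>F-{f}. \<bar>c g\<bar> * mass A g)"
    using assms by (intro mass_lin_comb_le) auto
  finally show ?thesis by simp
qed


section \<open>Cardinal arithmetic\<close>

lemma card_of_nat_ordLess_uncountable: "uncountable C \<Longrightarrow> |UNIV::nat set| <o |C|"
  using countable_card_of_nat not_ordLeq_iff_ordLess[OF card_of_Well_order card_of_Well_order]
  by blast

lemma card_of_finite_ordLess_infinite: "finite A \<Longrightarrow> infinite B \<Longrightarrow> |A| <o |B|"
  by (rule finite_ordLess_infinite) (auto simp: card_of_Well_order Field_card_of card_of_well_order_on)

lemma card_of_subset_ordLess: "X \<subseteq> Y \<Longrightarrow> |Y| <o |S| \<Longrightarrow> |X| <o |S|"
  using ordLeq_ordLess_trans[OF card_of_mono1] by blast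

lemma card_of_subset_ordIso: "X \<subseteq> S \<Longrightarrow> \<not> |X| <o |S| \<Longrightarrow> |X| =o |S|"
  using card_of_mono1 ordLeq_iff_ordLess_or_ordIso by blast

lemma card_of_Diff_not_ordLess:
  assumes "infinite S" "\<not> |X| <o |S|" "|Y| <o |S|"
  shows "\<not> |X - Y| <o |S|"
  using card_of_Un_ordLess_infinite[OF assms(1) _ assms(3), of "X - Y"]
    card_of_subset_ordLess[of X "(X - Y) \<union> Y" S] assms(2)
  by blast

lemma card_of_Times_ordLess_infinite:
  assumes "infinite C" "|A| <o |C|" "|B| <o |C|"
  shows "|A \<times> B| <o |C|"
proof -
  let ?D = "A <+> B"
  have "|A \<times> B| \<le>o |?D \<times> ?D|"
    using card_of_Times_mono1[OF card_of_Plus1] card_of_Times_mono2[OF card_of_Plus2]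
      ordLeq_transitive
    by blast
  moreover have "|?D \<times> ?D| <o |C|"
  proof (cases "finite ?D")
    case True
    then show ?thesis
      using assms(1) by (simp add: card_of_finite_ordLess_infinite)
  next
    case False
    then show ?thesis
      using card_of_Times_same_infinite card_of_Plus_ordLess_infinite[OF assms]
        ordIso_ordLess_trans
      by blast
  qed
  ultimately show ?thesis
    using ordLeq_ordLess_trans by blast
qed

lemma card_of_UN_ordLeq_Times:
  assumes "\<And>i. i \<in> I \<Longrightarrow> |A i| \<le>o |B|"
  shows "|\<Union>i\<in>I. A i| \<le>o |I \<times> B|"
proof -
  have "|\<Union>i\<in>I. A i| \<le>o |SIGMA i:I. A i|"
    by (rule card_of_UNION_Sigma)
  also have "|SIGMA i:I. A i| \<le>o |I \<times> B|"
    using assms by (intro card_of_Sigma_mono1) blast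
  finally show ?thesis .
qed

lemma card_of_UN_countable_ordLess:
  assumes "uncountable C" "|I| <o |C|" "\<And>i. i \<in> I \<Longrightarrow> countable (A i)"
  shows "|\<Union>i\<in>I. A i| <o |C|"
proof -
  have "|\<Union>i\<in>I. A i| \<le>o |I \<times> (UNIV::nat set)|"
    using assms(3) by (intro card_of_UN_ordLeq_Times) (simp add: countable_card_of_nat)
  moreover have "|I \<times> (UNIV::nat set)| <o |C|"
    using assms(1,2) countable_finite
    by (intro card_of_Times_ordLess_infinite card_of_nat_ordLess_uncountable) auto
  ultimately show ?thesis
    using ordLeq_ordLess_trans by blast
qed

lemma countable_cover_member_ordLeq:
  assumes "uncountable S" "S \<subseteq> (\<Union>n::nat. N n)" "|Z| <o |S|"
  shows "\<exists>n. |Z| \<le>o |N n|"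
proof (rule ccontr)
  assume "\<nexists>n. |Z| \<le>o |N n|"
  then have "|N n| \<le>o |Z|" for n
    using not_ordLeq_iff_ordLess[OF card_of_Well_order card_of_Well_order] ordLess_imp_ordLeq
    by blast
  then have "|\<Union>n. N n| \<le>o |(UNIV::nat set) \<times> Z|"
    by (intro card_of_UN_ordLeq_Times)
  moreover have "|(UNIV::nat set) \<times> Z| <o |S|"
    using assms(1,3) countable_finite
    by (intro card_of_Times_ordLess_infinite card_of_nat_ordLess_uncountable) auto
  moreover have "|S| \<le>o |\<Union>n. N n|"
    using assms(2) by (rule card_of_mono1)
  ultimately have "|S| <o |S|"
    using ordLeq_transitive ordLeq_ordLess_trans by metis
  then show False
    using ordLess_irreflexive by blast
qed

lemma uncountable_UN_nat:
  fixes N :: "nat \<Rightarrow> 'b set"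
  assumes "uncountable S" "S \<subseteq> (\<Union>n. N n)"
  shows "\<exists>n. uncountable (N n)"
proof (rule ccontr)
  assume "\<nexists>n. uncountable (N n)"
  then have "countable (\<Union>n. N n)"
    by (intro countable_UN) auto
  then show False
    using assms countable_subset by blast
qed

(* For infinite S: the cofinality of |S| is countable. *)
definition countable_cofinality :: "'b set \<Rightarrow> bool" where
  "countable_cofinality S \<longleftrightarrow> (\<exists>N :: nat \<Rightarrow> 'b set. S \<subseteq> (\<Union>n. N n) \<and> (\<forall>n. |N n| <o |S| ))"

lemma card_of_UN_ordLess_if_not_countable_cofinality:
  fixes U :: "nat \<Rightarrow> 'c set"
  assumes "\<not> countable_cofinality S" "\<And>n. |U n| <o |S|"
  shows "|\<Union>n. U n| <o |S|"
proof (rule ccontr)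
  assume "\<not> |\<Union>n. U n| <o |S|"
  then have "|S| \<le>o |\<Union>n. U n|"
    using not_ordLess_iff_ordLeq[OF card_of_Well_order card_of_Well_order] by blast
  then obtain f where f: "inj_on f S" "f ` S \<subseteq> (\<Union>n. U n)"
    unfolding card_of_ordLeq[symmetric] by (elim exE conjE)
  have small: "|S \<inter> f -` U n| <o |S|" for n
  proof -
    have "|S \<inter> f -` U n| \<le>o |U n|"
      unfolding card_of_ordLeq[symmetric] by (rule exI[of _ f]) (auto intro: inj_on_subset[OF f(1)])
    then show ?thesis
      using assms(2) ordLeq_ordLess_trans by blast
  qed
  have cover: "S \<subseteq> (\<Union>n. S \<inter> f -` U n)"
    using f(2) by blast
  have "countable_cofinality S"
    unfolding countable_cofinality_def using small cover by blast
  with assms(1) show False ..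
qed

lemma card_of_Diff_UN_not_ordLess:
  fixes N :: "nat \<Rightarrow> 'b set"
  assumes "infinite S" "\<not> countable_cofinality S" "\<And>n. |N n| <o |S|"
  shows "\<not> |S - (\<Union>n. N n)| <o |S|"
proof
  assume "|S - (\<Union>n. N n)| <o |S|"
  then have "|(S - (\<Union>n. N n)) \<union> (\<Union>n. N n)| <o |S|"
    using card_of_UN_ordLess_if_not_countable_cofinality[OF assms(2,3)]
    by (rule card_of_Un_ordLess_infinite[OF assms(1)])
  then have "|S| <o |S|"
    by (rule card_of_subset_ordLess[rotated]) blast
  then show False
    using ordLess_irreflexive by blast
qed

lemma card_of_lists_ordLeq_infinite:
  assumes "infinite A"
  shows "|lists A| \<le>o |A|"
proof -
  have "|{xs \<in> lists A. length xs = n}| \<le>o |A|" for n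
  proof (induction n)
    case 0
    have "{xs \<in> lists A. length xs = 0} \<subseteq> {[]}"
      by auto
    then have "finite {xs \<in> lists A. length xs = 0}"
      by (rule finite_subset) simp
    then show ?case
      using card_of_finite_ordLess_infinite[OF _ assms] ordLess_imp_ordLeq by blast
  next
    case (Suc n)
    have "{xs \<in> lists A. length xs = Suc n} = (\<lambda>(a, xs). a # xs) ` (A \<times> {xs \<in> lists A. length xs = n})"
      (is "?L = ?R")
    proof
      show "?L \<subseteq> ?R"
        by (auto simp: length_Suc_conv intro: rev_image_eqI)
      show "?R \<subseteq> ?L"
        by auto
    qed
    then have "|{xs \<in> lists A. length xs = Suc n}| \<le>o |A \<times> {xs \<in> lists A. length xs = n}|"
      by (simp add: card_of_image)
    also have "|A \<times> {xs \<in> lists A. length xs = n}| \<le>o |A \<times> A|"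
      by (rule card_of_Times_mono2[OF Suc.IH])
    also have "|A \<times> A| \<le>o |A|"
      using card_of_Times_same_infinite[OF assms] ordIso_iff_ordLeq by blast
    finally show ?case .
  qed
  then have "|\<Union>n. {xs \<in> lists A. length xs = n}| \<le>o |A|"
    using infinite_iff_card_of_nat assms by (intro card_of_UNION_ordLeq_infinite) auto
  moreover have "(\<Union>n. {xs \<in> lists A. length xs = n}) = lists A"
    by blast
  ultimately show ?thesis
    by simp
qed


section \<open>The density character of l1(Gamma)\<close>

definition finsupp_of :: "('a \<times> real) list \<Rightarrow> 'a \<Rightarrow> real" where
  "finsupp_of xs x = (case map_of xs x of None \<Rightarrow> 0 | Some r \<Rightarrow> r)"

definition rational_finsupp :: "'a set \<Rightarrow> ('a \<Rightarrow> real) set" where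
  "rational_finsupp \<Gamma> = finsupp_of ` lists (\<Gamma> \<times> \<rat>)"

lemma finsupp_of_eq_0: "x \<notin> fst ` set xs \<Longrightarrow> finsupp_of xs x = 0"
  using map_of_eq_None_iff[of xs x] by (simp add: finsupp_of_def)

lemma finsupp_of_map: "finsupp_of (map (\<lambda>y. (y, q y)) ys) x = (if x \<in> set ys then q x else 0)"
  by (simp add: finsupp_of_def map_of_map_restrict restrict_map_def)

lemma card_of_rational_finsupp:
  assumes "infinite \<Gamma>"
  shows "|rational_finsupp \<Gamma>| \<le>o |\<Gamma>|"
proof -
  have Q: "(\<rat> :: real set) \<noteq> {}"
    using Rats_0 by blast
  have "|\<rat> :: real set| \<le>o |UNIV :: nat set|"
    using countable_rat countable_card_of_nat by blast
  also have "|UNIV :: nat set| \<le>o |\<Gamma>|"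
    using assms infinite_iff_card_of_nat by blast
  finally have "|\<Gamma> \<times> (\<rat> :: real set)| =o |\<Gamma>|"
    using card_of_Times_infinite[OF assms Q] by blast
  moreover have "infinite (\<Gamma> \<times> (\<rat> :: real set))"
    using assms Q by (auto simp: finite_cartesian_product_iff)
  ultimately have "|lists (\<Gamma> \<times> (\<rat> :: real set))| \<le>o |\<Gamma>|"
    by (blast intro: ordLeq_ordIso_trans card_of_lists_ordLeq_infinite)
  then show ?thesis
    unfolding rational_finsupp_def by (rule ordLeq_transitive[OF card_of_image])
qed

lemma rational_finsupp_subset_l1_space: "rational_finsupp \<Gamma> \<subseteq> l1_space \<Gamma>"
proof
  fix g assume "g \<in> rational_finsupp \<Gamma>"
  then obtain xs where xs: "xs \<in> lists (\<Gamma> \<times> \<rat>)" and g: "g = finsupp_of xs"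
    unfolding rational_finsupp_def by blast
  have supp: "g x = 0" if "x \<notin> fst ` set xs" for x
    using that by (simp add: g finsupp_of_eq_0)
  have sub: "fst ` set xs \<subseteq> \<Gamma>"
    using xs by auto
  have "(\<lambda>x. \<bar>g x\<bar>) summable_on fst ` set xs"
    by (simp add: summable_on_finite)
  moreover have "(\<lambda>x. \<bar>g x\<bar>) summable_on fst ` set xs \<longleftrightarrow> (\<lambda>x. \<bar>g x\<bar>) summable_on \<Gamma>"
    by (rule summable_on_cong_neutral) (use supp sub in auto)
  ultimately show "g \<in> l1_space \<Gamma>"
    using supp sub by (auto simp: l1_space_def)
qed

lemma l1_space_small_tail:
  assumes "f \<in> l1_space \<Gamma>" "0 < e"
  obtains F where "finite F" "F \<subseteq> \<Gamma>" "mass (\<Gamma> - F) f < e"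
proof -
  obtain F where F: "finite F" "F \<subseteq> \<Gamma>" "dist (\<Sum>x\<in>F. \<bar>f x\<bar>) (mass \<Gamma> f) \<le> e / 2"
    using infsum_finite_approximation[OF l1_space_abs_summable_on[OF assms(1)], of "e / 2"] assms(2)
    by (auto simp: mass_def)
  have "mass \<Gamma> f = (\<Sum>x\<in>F. \<bar>f x\<bar>) + mass (\<Gamma> - F) f"
    using mass_Un[OF assms(1), of F "\<Gamma> - F"] F(1,2) by (simp add: Un_absorb1 mass_finite)
  then have "mass (\<Gamma> - F) f < e"
    using F(3) assms(2) by (simp add: dist_real_def)
  with F(1,2) show ?thesis ..
qed

lemma rational_approximation_on_finite:
  fixes f :: "'a \<Rightarrow> real"
  assumes "finite F" "0 < e"
  obtains q where "\<And>x. q x \<in> \<rat>" "(\<Sum>x\<in>F. \<bar>f x - q x\<bar>) < e"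
proof -
  define \<eta> where "\<eta> = e / (real (card F) + 1)"
  have "\<eta> > 0"
    using assms(2) by (simp add: \<eta>_def)
  then have "\<forall>x. \<exists>r\<in>\<rat>. f x - \<eta> < r \<and> r < f x + \<eta>"
    by (intro allI Rats_dense_in_real) simp
  then obtain q where q: "\<And>x. q x \<in> \<rat>" "\<And>x. f x - \<eta> < q x" "\<And>x. q x < f x + \<eta>"
    by metis
  have close: "\<bar>f x - q x\<bar> < \<eta>" for x
    using q(2,3)[of x] by (simp add: abs_less_iff algebra_simps)
  have "(\<Sum>x\<in>F. \<bar>f x - q x\<bar>) \<le> real (card F) * \<eta>"
    using sum_mono[of F "\<lambda>x. \<bar>f x - q x\<bar>" "\<lambda>_. \<eta>"] close by (simp add: less_imp_le)
  also have "\<dots> < e"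
    using assms(2) by (simp add: \<eta>_def field_simps)
  finally show ?thesis
    using q(1) that by blast
qed

lemma dense_rational_finsupp: "dense_wrt (l1_space \<Gamma>) (l1_dist \<Gamma>) (rational_finsupp \<Gamma>)"
  unfolding dense_wrt_def
proof (intro conjI ballI allI impI)
  show "rational_finsupp \<Gamma> \<subseteq> l1_space \<Gamma>"
    by (rule rational_finsupp_subset_l1_space)
  fix f e assume f: "f \<in> l1_space \<Gamma>" and e: "0 < (e::real)"
  obtain F where F: "finite F" "F \<subseteq> \<Gamma>" "mass (\<Gamma> - F) f < e / 2"
    using l1_space_small_tail[OF f, of "e / 2"] e by auto
  obtain q where q: "\<And>x. q x \<in> \<rat>" "(\<Sum>x\<in>F. \<bar>f x - q x\<bar>) < e / 2"
    using rational_approximation_on_finite[OF F(1), of "e / 2" f] e by auto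
  obtain ys where ys: "set ys = F"
    using finite_list[OF F(1)] by blast
  define g where "g = finsupp_of (map (\<lambda>y. (y, q y)) ys)"
  have g: "g x = (if x \<in> F then q x else 0)" for x
    by (simp add: g_def finsupp_of_map ys)
  have g_rational: "g \<in> rational_finsupp \<Gamma>"
    unfolding g_def rational_finsupp_def using ys F(2) q(1) by (intro imageI) auto
  then have "(\<lambda>x. f x - g x) \<in> l1_space \<Gamma>"
    using f rational_finsupp_subset_l1_space by (blast intro: l1_space_diff)
  then have "l1_dist \<Gamma> f g = mass F (\<lambda>x. f x - g x) + mass (\<Gamma> - F) (\<lambda>x. f x - g x)"
    using mass_Un[of _ \<Gamma> F "\<Gamma> - F"] F(2)
    by (simp add: l1_dist_def l1_norm_def mass_def[symmetric] Un_absorb1)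
  also have "mass F (\<lambda>x. f x - g x) = (\<Sum>x\<in>F. \<bar>f x - q x\<bar>)"
    using F(1) by (simp add: mass_finite g)
  also have "mass (\<Gamma> - F) (\<lambda>x. f x - g x) = mass (\<Gamma> - F) f"
    unfolding mass_def by (rule infsum_cong) (simp add: g)
  finally have "l1_dist \<Gamma> f g < e"
    using F(3) q(2) by simp
  with g_rational show "\<exists>g\<in>rational_finsupp \<Gamma>. l1_dist \<Gamma> f g < e"
    by blast
qed

lemma card_of_le_dens_l1_space:
  assumes "infinite \<Gamma>" "card_eq_dens (l1_space \<Gamma>) (l1_dist \<Gamma>) S"
  shows "|S| \<le>o |\<Gamma>|"
proof -
  have "|S| \<le>o |rational_finsupp \<Gamma>|"
    using assms(2) dense_rational_finsupp unfolding card_eq_dens_def by blast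
  then show ?thesis
    using card_of_rational_finsupp[OF assms(1)] by (rule ordLeq_transitive)
qed


section \<open>Disjoint blocks obstruct linear density\<close>

lemma lin_comb_blocks_mass_ge:
  assumes F: "F \<subseteq> l1_space \<Gamma>" "finite F" and "0 \<le> t"
    and blocks: "\<And>g. g \<in> F \<Longrightarrow> t * \<bar>g \<gamma>\<bar> + (\<Sum>f\<in>F-{g}. mass (B f) g) \<le> mass (B g) g"
  shows "t * \<bar>\<Sum>v\<in>F. c v * v \<gamma>\<bar> \<le> (\<Sum>f\<in>F. mass (B f) (\<lambda>x. \<Sum>v\<in>F. c v * v x))"
proof -
  let ?h = "\<lambda>x. \<Sum>v\<in>F. c v * v x"
  have "t * \<bar>?h \<gamma>\<bar> \<le> t * (\<Sum>g\<in>F. \<bar>c g\<bar> * \<bar>g \<gamma>\<bar>)"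
    using assms(3) sum_abs[of "\<lambda>v. c v * v \<gamma>" F] by (simp add: mult_left_mono abs_mult)
  also have "\<dots> = (\<Sum>g\<in>F. \<bar>c g\<bar> * (t * \<bar>g \<gamma>\<bar>))"
    by (simp add: sum_distrib_left mult.left_commute)
  also have "\<dots> \<le> (\<Sum>g\<in>F. \<bar>c g\<bar> * (mass (B g) g - (\<Sum>f\<in>F-{g}. mass (B f) g)))"
  proof (rule sum_mono, rule mult_left_mono)
    fix g assume "g \<in> F"
    then have "t * \<bar>g \<gamma>\<bar> + (\<Sum>f\<in>F-{g}. mass (B f) g) \<le> mass (B g) g"
      by (rule blocks)
    then show "t * \<bar>g \<gamma>\<bar> \<le> mass (B g) g - (\<Sum>f\<in>F-{g}. mass (B f) g)"
      by linarith
  qed simp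
  also have "\<dots> = (\<Sum>f\<in>F. \<bar>c f\<bar> * mass (B f) f) - (\<Sum>g\<in>F. \<Sum>f\<in>F-{g}. \<bar>c g\<bar> * mass (B f) g)"
    by (simp add: right_diff_distrib sum_subtractf sum_distrib_left)
  also have "(\<Sum>g\<in>F. \<Sum>f\<in>F-{g}. \<bar>c g\<bar> * mass (B f) g) = (\<Sum>f\<in>F. \<Sum>g\<in>F-{f}. \<bar>c g\<bar> * mass (B f) g)"
  proof -
    have "{b. b \<in> F \<and> b \<noteq> a} = F - {a}" "{b. b \<in> F \<and> a \<noteq> b} = F - {a}" for a
      by auto
    then show ?thesis
      using sum.swap_restrict[OF F(2) F(2), of "\<lambda>g f. \<bar>c g\<bar> * mass (B f) g" "\<lambda>g f. f \<noteq> g"]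
      by (simp only:)
  qed
  also have "(\<Sum>f\<in>F. \<bar>c f\<bar> * mass (B f) f) - \<dots> \<le> (\<Sum>f\<in>F. mass (B f) ?h)"
  proof -
    have "(\<Sum>f\<in>F. \<bar>c f\<bar> * mass (B f) f - (\<Sum>g\<in>F-{f}. \<bar>c g\<bar> * mass (B f) g)) \<le> (\<Sum>f\<in>F. mass (B f) ?h)"
      by (rule sum_mono) (rule lin_comb_mass_ge[OF F(2,1)])
    then show ?thesis
      by (simp add: sum_subtractf)
  qed
  finally show ?thesis .
qed

lemma l1_dist_indicator_ge:
  assumes "h \<in> l1_space \<Gamma>" "\<gamma> \<in> \<Gamma>" "finite F" "disjoint_family_on B F" "\<And>f. f \<in> F \<Longrightarrow> \<gamma> \<notin> B f"
  shows "\<bar>1 - h \<gamma>\<bar> + (\<Sum>f\<in>F. mass (B f) h) \<le> l1_dist \<Gamma> (\<lambda>x. if x = \<gamma> then 1 else 0) h"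
proof -
  define D where "D x = (if x = \<gamma> then 1 else 0) - h x" for x
  have D: "D \<in> l1_space \<Gamma>"
    unfolding D_def by (rule l1_space_diff[OF l1_space_indicator[OF assms(2)] assms(1)])
  have "mass (B f) h = mass (B f) D" if "f \<in> F" for f
    unfolding mass_def D_def by (rule infsum_cong) (use assms(5)[OF that] in auto)
  then have "\<bar>1 - h \<gamma>\<bar> + (\<Sum>f\<in>F. mass (B f) h) = mass {\<gamma>} D + (\<Sum>f\<in>F. mass (B f) D)"
    by (simp add: mass_finite D_def)
  also have "\<dots> = mass ({\<gamma>} \<union> (\<Union>f\<in>F. B f)) D"
    using mass_Un[OF D, of "{\<gamma>}" "\<Union>f\<in>F. B f"] mass_UN[OF D assms(3,4)] assms(5) by auto
  also have "\<dots> \<le> mass UNIV D"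
    by (rule mass_mono[OF D]) simp
  also have "\<dots> = l1_dist \<Gamma> (\<lambda>x. if x = \<gamma> then 1 else 0) h"
    unfolding l1_dist_def l1_norm_eq_mass[OF D[unfolded D_def]] D_def ..
  finally show ?thesis .
qed

lemma not_linearly_dense_if_blocks:
  assumes "\<Lambda> \<subseteq> l1_space \<Gamma>" "\<gamma> \<in> \<Gamma>" "0 < t" "t \<le> 1"
    and "\<And>g. g \<in> \<Lambda> \<Longrightarrow> \<gamma> \<notin> B g" "disjoint_family_on B \<Lambda>"
    and "\<And>g F. g \<in> \<Lambda> \<Longrightarrow> finite F \<Longrightarrow> F \<subseteq> \<Lambda> \<Longrightarrow>
           t * \<bar>g \<gamma>\<bar> + (\<Sum>f\<in>F-{g}. mass (B f) g) \<le> mass (B g) g"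
  shows "\<not> linearly_dense (l1_space \<Gamma>) (l1_dist \<Gamma>) \<Lambda>"
proof
  let ?e = "\<lambda>x. if x = \<gamma> then 1 else 0 :: real"
  assume "linearly_dense (l1_space \<Gamma>) (l1_dist \<Gamma>) \<Lambda>"
  then obtain h where "h \<in> lin_span \<Lambda>" and close: "l1_dist \<Gamma> ?e h < t"
    using l1_space_indicator[OF assms(2)] assms(3) unfolding linearly_dense_def dense_wrt_def by blast
  then obtain F c where F: "finite F" "F \<subseteq> \<Lambda>" and h: "h = (\<lambda>x. \<Sum>v\<in>F. c v * v x)"
    unfolding lin_span_def by blast
  have "h \<in> l1_space \<Gamma>"
    unfolding h using F assms(1) by (intro l1_space_lin_comb) auto
  then have "\<bar>1 - h \<gamma>\<bar> + (\<Sum>f\<in>F. mass (B f) h) \<le> l1_dist \<Gamma> ?e h"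
    using assms(2,5,6) F by (intro l1_dist_indicator_ge) (auto intro: disjoint_family_on_mono)
  moreover have "t * \<bar>h \<gamma>\<bar> \<le> (\<Sum>f\<in>F. mass (B f) h)"
    unfolding h
  proof (rule lin_comb_blocks_mass_ge)
    show "F \<subseteq> l1_space \<Gamma>" "finite F" "0 \<le> t"
      using assms(1,3) F by auto
    show "t * \<bar>g \<gamma>\<bar> + (\<Sum>f\<in>F-{g}. mass (B f) g) \<le> mass (B g) g" if "g \<in> F" for g
      using that F by (intro assms(7)) auto
  qed
  moreover have "t \<le> \<bar>1 - h \<gamma>\<bar> + t * \<bar>h \<gamma>\<bar>"
  proof -
    have "t \<le> t * \<bar>1 - h \<gamma>\<bar> + t * \<bar>h \<gamma>\<bar>"
      using assms(3) abs_triangle_ineq[of "1 - h \<gamma>" "h \<gamma>"] by (simp add: distrib_left[symmetric])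
    also have "t * \<bar>1 - h \<gamma>\<bar> \<le> \<bar>1 - h \<gamma>\<bar>"
      using assms(3,4) by (simp add: mult_left_le_one_le)
    finally show ?thesis by simp
  qed
  ultimately show False
    using close by linarith
qed

lemma not_linearly_dense_if_vanishing:
  assumes "\<Lambda> \<subseteq> l1_space \<Gamma>" "\<gamma> \<in> \<Gamma>" "\<And>f. f \<in> \<Lambda> \<Longrightarrow> f \<gamma> = 0"
  shows "\<not> linearly_dense (l1_space \<Gamma>) (l1_dist \<Gamma>) \<Lambda>"
  by (rule not_linearly_dense_if_blocks[OF assms(1,2), of 1 "\<lambda>_. {}"])
    (auto simp: assms(3) mass_def disjoint_family_on_def)

lemma not_linearly_dense_if_card_ordLess:
  assumes "uncountable \<Gamma>" "S \<subseteq> l1_space \<Gamma>" "|S| <o |\<Gamma>|"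
  shows "\<not> linearly_dense (l1_space \<Gamma>) (l1_dist \<Gamma>) S"
proof -
  have "|\<Union>g\<in>S. {x. g x \<noteq> 0}| <o |\<Gamma>|"
    using assms(2) l1_space_countable_support by (intro card_of_UN_countable_ordLess[OF assms(1,3)]) blast
  then have "\<not> \<Gamma> \<subseteq> (\<Union>g\<in>S. {x. g x \<noteq> 0})"
    using card_of_subset_ordLess ordLess_irreflexive by blast
  then obtain \<gamma> where "\<gamma> \<in> \<Gamma>" "\<And>g. g \<in> S \<Longrightarrow> g \<gamma> = 0"
    by blast
  then show ?thesis
    by (rule not_linearly_dense_if_vanishing[OF assms(2)])
qed


section \<open>Block systems\<close>

definition tail_heavy :: "('a \<Rightarrow> real) set \<Rightarrow> 'a set \<Rightarrow> real \<Rightarrow> ('a \<Rightarrow> real) set" where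
  "tail_heavy S U r = {g \<in> S. r * mass UNIV g \<le> mass (-U) g}"

lemma tail_heavy_antimono:
  assumes "S \<subseteq> l1_space \<Gamma>" "U \<subseteq> U'"
  shows "tail_heavy S U' r \<subseteq> tail_heavy S U r"
proof
  fix g assume g: "g \<in> tail_heavy S U' r"
  then have "mass (-U') g \<le> mass (-U) g"
    using assms by (intro mass_mono) (auto simp: tail_heavy_def)
  with g show "g \<in> tail_heavy S U r"
    by (auto simp: tail_heavy_def)
qed

lemma tail_heavy_if_nonzero_outside:
  assumes "g \<in> S" "S \<subseteq> l1_space \<Gamma>" "x \<notin> U" "g x \<noteq> 0"
  obtains n :: nat where "g \<in> tail_heavy S U (inverse (Suc n))"
proof -
  have g_l1: "g \<in> l1_space \<Gamma>"
    using assms(1,2) by blast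
  have pos: "0 < mass (-U) g"
    using abs_le_mass[OF g_l1, of x "-U"] assms(3,4) by simp
  moreover have le: "mass (-U) g \<le> mass UNIV g"
    by (rule mass_mono[OF g_l1]) simp
  ultimately obtain n where "inverse (Suc n) < mass (-U) g / mass UNIV g"
    using reals_Archimedean[of "mass (-U) g / mass UNIV g"] by force
  then have "inverse (Suc n) * mass UNIV g \<le> mass (-U) g"
    using pos le by (simp add: field_simps)
  with assms(1) that show ?thesis
    by (simp add: tail_heavy_def)
qed

(* The constants are chosen for not_linearly_dense_if_blocks with t = delta:
   delta |g gamma| + 2 delta ||g|| (other blocks) <= 4 delta ||g|| (own block). *)
definition block_system ::
    "('a \<Rightarrow> real) set \<Rightarrow> 'a set \<Rightarrow> real \<Rightarrow> (('a \<Rightarrow> real) \<times> 'a set) set \<Rightarrow> bool" where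
  "block_system S U \<delta> P \<longleftrightarrow>
     (\<forall>(g, B) \<in> P. g \<in> S \<and> B \<subseteq> {x. g x \<noteq> 0} - U \<and> 4 * \<delta> * mass UNIV g \<le> mass B g \<and>
        mass (\<Union>(snd ` P) - B) g \<le> 2 * \<delta> * mass UNIV g) \<and>
     (\<forall>p \<in> P. \<forall>q \<in> P. p \<noteq> q \<longrightarrow> fst p \<noteq> fst q \<and> snd p \<inter> snd q = {})"

lemma block_systemD:
  assumes "block_system S U \<delta> P" "(g, B) \<in> P"
  shows "g \<in> S" "B \<subseteq> {x. g x \<noteq> 0} - U" "4 * \<delta> * mass UNIV g \<le> mass B g"
    "mass (\<Union>(snd ` P) - B) g \<le> 2 * \<delta> * mass UNIV g"
  using assms unfolding block_system_def by auto

lemma block_system_distinct: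
  assumes "block_system S U \<delta> P" "(g, B) \<in> P" "(g', B') \<in> P" "(g, B) \<noteq> (g', B')"
  shows "g \<noteq> g'" "B \<inter> B' = {}"
  using assms unfolding block_system_def by fastforce+

lemma block_systemI:
  assumes "\<And>g B. (g, B) \<in> P \<Longrightarrow> g \<in> S \<and> B \<subseteq> {x. g x \<noteq> 0} - U \<and>
      4 * \<delta> * mass UNIV g \<le> mass B g \<and> mass (\<Union>(snd ` P) - B) g \<le> 2 * \<delta> * mass UNIV g"
    and "\<And>g B g' B'. (g, B) \<in> P \<Longrightarrow> (g', B') \<in> P \<Longrightarrow> (g, B) \<noteq> (g', B') \<Longrightarrow> g \<noteq> g' \<and> B \<inter> B' = {}"
  shows "block_system S U \<delta> P"
  using assms unfolding block_system_def by fastforce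

lemma finite_subset_Union_snd_chain:
  assumes C: "subset.chain \<A> C" and p: "p \<in> \<Union>C" and F: "finite F" "F \<subseteq> \<Union>(snd ` \<Union>C)"
  obtains P where "P \<in> C" "p \<in> P" "F \<subseteq> \<Union>(snd ` P)"
proof -
  have "\<exists>q\<in>\<Union>C. x \<in> snd q" if "x \<in> F" for x
    using F(2) that by blast
  then obtain q where q: "\<And>x. x \<in> F \<Longrightarrow> q x \<in> \<Union>C \<and> x \<in> snd (q x)"
    by metis
  have "finite (insert p (q ` F))" "insert p (q ` F) \<subseteq> \<Union>C" "C \<noteq> {}"
    using p F(1) q by auto
  then obtain P where P: "P \<in> C" "insert p (q ` F) \<subseteq> P"
    by (rule finite_subset_Union_chain[OF _ _ _ C])
  have "F \<subseteq> \<Union>(snd ` P)"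
  proof
    fix x assume "x \<in> F"
    then have "q x \<in> P" "x \<in> snd (q x)"
      using q P(2) by auto
    then show "x \<in> \<Union>(snd ` P)"
      by blast
  qed
  with P that show ?thesis
    by blast
qed

lemma block_system_Union_chain:
  assumes S: "S \<subseteq> l1_space \<Gamma>" and C: "subset.chain {P. block_system S U \<delta> P} C"
  shows "block_system S U \<delta> (\<Union>C)"
proof -
  have sys: "block_system S U \<delta> P" if "P \<in> C" for P
    using C that unfolding subset_chain_def by blast
  show ?thesis
  proof (rule block_systemI)
    fix g B assume gB: "(g, B) \<in> \<Union>C"
    then obtain P where P: "P \<in> C" "(g, B) \<in> P"
      by blast
    have g_l1: "g \<in> l1_space \<Gamma>"
      using S block_systemD(1)[OF sys[OF P(1)] P(2)] by blast
    have "mass (\<Union>(snd ` \<Union>C) - B) g \<le> 2 * \<delta> * mass UNIV g"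
    proof (rule mass_le_if_finite_subsets[OF g_l1])
      fix F assume F: "finite F" "F \<subseteq> \<Union>(snd ` \<Union>C) - B"
      have "F \<subseteq> \<Union>(snd ` \<Union>C)"
        using F(2) by (rule subset_trans) (rule Diff_subset)
      then obtain P' where P': "P' \<in> C" "(g, B) \<in> P'" "F \<subseteq> \<Union>(snd ` P')"
        by (rule finite_subset_Union_snd_chain[OF C gB F(1)])
      then have "mass F g \<le> mass (\<Union>(snd ` P') - B) g"
        using F(2) by (intro mass_mono[OF g_l1]) blast
      also have "\<dots> \<le> 2 * \<delta> * mass UNIV g"
        by (rule block_systemD(4)[OF sys[OF P'(1)] P'(2)])
      finally show "mass F g \<le> 2 * \<delta> * mass UNIV g" .
    qed
    then show "g \<in> S \<and> B \<subseteq> {x. g x \<noteq> 0} - U \<and> 4 * \<delta> * mass UNIV g \<le> mass B g \<and>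
        mass (\<Union>(snd ` \<Union>C) - B) g \<le> 2 * \<delta> * mass UNIV g"
      using block_systemD(1-3)[OF sys[OF P(1)] P(2)] by blast
  next
    fix g B g' B' assume gB: "(g, B) \<in> \<Union>C" "(g', B') \<in> \<Union>C" "(g, B) \<noteq> (g', B')"
    obtain P where P: "P \<in> C" "{(g, B), (g', B')} \<subseteq> P"
      by (rule finite_subset_Union_chain[of "{(g, B), (g', B')}" C, OF _ _ _ C]) (use gB in auto)
    then have "(g, B) \<in> P" "(g', B') \<in> P"
      by auto
    with gB(3) show "g \<noteq> g' \<and> B \<inter> B' = {}"
      using block_system_distinct[OF sys[OF P(1)]] by blast
  qed
qed

lemma block_system_insert:
  assumes M: "block_system S U \<delta> M" and S: "S \<subseteq> l1_space \<Gamma>"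
    and V: "U \<subseteq> V" "\<And>f B. (f, B) \<in> M \<Longrightarrow> {x. f x \<noteq> 0} \<subseteq> V"
    and g: "g \<in> S" "g \<notin> fst ` M" "4 * \<delta> * mass UNIV g \<le> mass (-V) g"
      "mass (-U) g \<le> 6 * \<delta> * mass UNIV g"
  shows "block_system S U \<delta> (insert (g, {x. g x \<noteq> 0} - V) M)"
proof -
  let ?Bg = "{x. g x \<noteq> 0} - V" and ?M' = "insert (g, {x. g x \<noteq> 0} - V) M"
  have g_l1: "g \<in> l1_space \<Gamma>"
    using S g(1) by blast
  have blocks_M: "\<Union>(snd ` M) \<subseteq> V - U"
    using block_systemD(2)[OF M] V(2) by fastforce
  have "mass (\<Union>(snd ` ?M') - ?Bg) g \<le> mass (V - U) g"
    using blocks_M by (intro mass_mono[OF g_l1]) auto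
  then have new_tail: "mass (\<Union>(snd ` ?M') - ?Bg) g \<le> 2 * \<delta> * mass UNIV g"
    using mass_Compl_split[OF g_l1 V(1)] g(3,4) by linarith
  have new_block: "4 * \<delta> * mass UNIV g \<le> mass ?Bg g"
    using g(3) mass_support_Diff[of g V] by simp
  have old_tail: "mass (\<Union>(snd ` ?M') - B) f \<le> 2 * \<delta> * mass UNIV f" if fB: "(f, B) \<in> M" for f B
  proof -
    have "mass (\<Union>(snd ` ?M') - B) f \<le> mass ((\<Union>(snd ` M) - B) \<union> ?Bg) f"
      using S block_systemD(1)[OF M fB] by (intro mass_mono) auto
    also have "\<dots> = mass (\<Union>(snd ` M) - B) f"
      using V(2)[OF fB] by (intro mass_Un_vanishing) auto
    finally show ?thesis
      using block_systemD(4)[OF M fB] by linarith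
  qed
  show ?thesis
  proof (rule block_systemI)
    fix f B assume fB: "(f, B) \<in> ?M'"
    show "f \<in> S \<and> B \<subseteq> {x. f x \<noteq> 0} - U \<and> 4 * \<delta> * mass UNIV f \<le> mass B f \<and>
        mass (\<Union>(snd ` ?M') - B) f \<le> 2 * \<delta> * mass UNIV f"
    proof (cases "(f, B) = (g, ?Bg)")
      case True
      then have "f = g" "B = ?Bg"
        by auto
      moreover have "?Bg \<subseteq> {x. g x \<noteq> 0} - U"
        using V(1) by blast
      ultimately show ?thesis
        using g(1) new_block new_tail by simp
    next
      case False
      then have "(f, B) \<in> M"
        using fB by blast
      then show ?thesis
        using block_systemD(1-3)[OF M] old_tail by (intro conjI)
    qed
  next
    fix f B f' B' assume "(f, B) \<in> ?M'" "(f', B') \<in> ?M'" "(f, B) \<noteq> (f', B')"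
    moreover have "f \<noteq> g \<and> B \<inter> ?Bg = {}" if "(f, B) \<in> M" for f B
      using that g(2) blocks_M by force
    ultimately show "f \<noteq> f' \<and> B \<inter> B' = {}"
      using block_system_distinct[OF M] by blast
  qed
qed

lemma maximal_block_system_large:
  assumes S: "S \<subseteq> l1_space \<Gamma>" "uncountable S" and U: "|U| <o |S|"
    and heavy: "\<And>V. |V| <o |S| \<Longrightarrow> \<not> |tail_heavy S V (4 * \<delta>)| <o |S|"
    and light: "|tail_heavy S U (6 * \<delta>)| <o |S|"
    and M: "block_system S U \<delta> M"
    and max: "\<And>M'. block_system S U \<delta> M' \<Longrightarrow> M \<subseteq> M' \<Longrightarrow> M' = M"
  shows "\<not> |fst ` M| <o |S|"
proof
  assume small: "|fst ` M| <o |S|"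
  have S_inf: "infinite S"
    using S(2) countable_finite by blast
  define V where "V = U \<union> (\<Union>f\<in>fst ` M. {x. f x \<noteq> 0})"
  have "|\<Union>f\<in>fst ` M. {x. f x \<noteq> 0}| <o |S|"
  proof (rule card_of_UN_countable_ordLess[OF S(2) small])
    fix f assume "f \<in> fst ` M"
    then have "f \<in> l1_space \<Gamma>"
      using S(1) block_systemD(1)[OF M] by force
    then show "countable {x. f x \<noteq> 0}"
      by (rule l1_space_countable_support)
  qed
  then have "|V| <o |S|"
    unfolding V_def by (rule card_of_Un_ordLess_infinite[OF S_inf U])
  then have "\<not> |tail_heavy S V (4 * \<delta>) - tail_heavy S U (6 * \<delta>)| <o |S|"
    using card_of_Diff_not_ordLess[OF S_inf heavy light] by blast
  then have "\<not> tail_heavy S V (4 * \<delta>) - tail_heavy S U (6 * \<delta>) \<subseteq> fst ` M"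
    using small card_of_subset_ordLess by blast
  then obtain g where g: "g \<in> tail_heavy S V (4 * \<delta>)" "g \<notin> tail_heavy S U (6 * \<delta>)" "g \<notin> fst ` M"
    by blast
  have "block_system S U \<delta> (insert (g, {x. g x \<noteq> 0} - V) M)"
  proof (rule block_system_insert[OF M S(1)])
    show "U \<subseteq> V"
      by (simp add: V_def)
    show "{x. f x \<noteq> 0} \<subseteq> V" if "(f, B) \<in> M" for f B
      using that unfolding V_def by force
    show "g \<in> S" "g \<notin> fst ` M" "4 * \<delta> * mass UNIV g \<le> mass (- V) g"
      "mass (- U) g \<le> 6 * \<delta> * mass UNIV g"
      using g by (auto simp: tail_heavy_def)
  qed
  then have "(g, {x. g x \<noteq> 0} - V) \<in> M"
    using max by blast
  with g(3) show False
    by force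
qed

lemma block_system_not_linearly_dense:
  assumes S: "S \<subseteq> l1_space \<Gamma>" and M: "block_system S U \<delta> M"
    and \<gamma>: "\<gamma> \<in> \<Gamma>" "\<gamma> \<in> U" and \<delta>: "0 < \<delta>" "\<delta> \<le> 1"
  shows "\<not> linearly_dense (l1_space \<Gamma>) (l1_dist \<Gamma>) (fst ` M)"
proof -
  define B where "B f = (SOME B. (f, B) \<in> M)" for f
  have fB: "(f, B f) \<in> M" if "f \<in> fst ` M" for f
    using that unfolding B_def by (auto intro: someI)
  have l1: "fst ` M \<subseteq> l1_space \<Gamma>"
    using S block_systemD(1)[OF M] by force
  have disj: "disjoint_family_on B (fst ` M)"
    unfolding disjoint_family_on_def using block_system_distinct(2)[OF M fB fB] by blast
  show ?thesis
  proof (rule not_linearly_dense_if_blocks[OF l1 \<gamma>(1) \<delta> _ disj])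
    show "\<gamma> \<notin> B g" if "g \<in> fst ` M" for g
      using block_systemD(2)[OF M fB[OF that]] \<gamma>(2) by blast
    fix g F assume g: "g \<in> fst ` M" and F: "finite F" "F \<subseteq> fst ` M"
    have g_l1: "g \<in> l1_space \<Gamma>"
      using g l1 by blast
    have "(\<Sum>f\<in>F-{g}. mass (B f) g) = mass (\<Union>f\<in>F-{g}. B f) g"
      using F disj by (intro mass_UN[OF g_l1, symmetric]) (auto intro: disjoint_family_on_mono)
    also have "\<dots> \<le> mass (\<Union>(snd ` M) - B g) g"
    proof (rule mass_mono[OF g_l1], rule UN_least)
      fix f assume f: "f \<in> F - {g}"
      then have "(f, B f) \<in> M"
        using F(2) fB by blast
      moreover have "B f \<inter> B g = {}"
        using f F(2) g disj unfolding disjoint_family_on_def by blast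
      ultimately show "B f \<subseteq> \<Union>(snd ` M) - B g"
        by force
    qed
    also have "\<dots> \<le> 2 * \<delta> * mass UNIV g"
      by (rule block_systemD(4)[OF M fB[OF g]])
    finally have "(\<Sum>f\<in>F-{g}. mass (B f) g) \<le> 2 * \<delta> * mass UNIV g" .
    moreover have "\<delta> * \<bar>g \<gamma>\<bar> \<le> \<delta> * mass UNIV g"
      using abs_le_mass[OF g_l1] \<delta>(1) by (simp add: mult_left_mono)
    moreover have "0 \<le> \<delta> * mass UNIV g"
      using \<delta>(1) mass_nonneg[of UNIV g] by simp
    ultimately show "\<delta> * \<bar>g \<gamma>\<bar> + (\<Sum>f\<in>F-{g}. mass (B f) g) \<le> mass (B g) g"
      using block_systemD(3)[OF M fB[OF g]] by linarith
  qed
qed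

lemma exists_large_not_linearly_dense_subset_if_threshold:
  assumes S: "S \<subseteq> l1_space \<Gamma>" "uncountable S"
    and \<gamma>: "\<gamma> \<in> \<Gamma>" "\<gamma> \<in> U" and U: "|U| <o |S|" and \<delta>: "0 < \<delta>" "\<delta> \<le> 1"
    and heavy: "\<And>V. |V| <o |S| \<Longrightarrow> \<not> |tail_heavy S V (4 * \<delta>)| <o |S|"
    and light: "|tail_heavy S U (6 * \<delta>)| <o |S|"
  shows "\<exists>\<Lambda>\<subseteq>S. |\<Lambda>| =o |S| \<and> \<not> linearly_dense (l1_space \<Gamma>) (l1_dist \<Gamma>) \<Lambda>"
proof -
  have "\<exists>M\<in>{P. block_system S U \<delta> P}. \<forall>X\<in>{P. block_system S U \<delta> P}. M \<subseteq> X \<longrightarrow> X = M"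
    by (rule subset_Zorn') (simp add: block_system_Union_chain[OF S(1)])
  then obtain M where M: "block_system S U \<delta> M"
    and max: "\<And>M'. block_system S U \<delta> M' \<Longrightarrow> M \<subseteq> M' \<Longrightarrow> M' = M"
    by blast
  have sub: "fst ` M \<subseteq> S"
    using block_systemD(1)[OF M] by force
  have "|fst ` M| =o |S|"
    using sub maximal_block_system_large[OF S U heavy light M max] by (rule card_of_subset_ordIso)
  then show ?thesis
    using sub block_system_not_linearly_dense[OF S(1) M \<gamma> \<delta>] by blast
qed


section \<open>Subsets of full cardinality that are not linearly dense\<close>

lemma l1_space_subset_UN_zero_sets:
  assumes "S \<subseteq> l1_space \<Gamma>" "uncountable G"
  shows "S \<subseteq> (\<Union>\<gamma>\<in>G. {g \<in> S. g \<gamma> = 0})"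
proof
  fix g assume g: "g \<in> S"
  then have "\<not> G \<subseteq> {x. g x \<noteq> 0}"
    using assms l1_space_countable_support countable_subset by blast
  then show "g \<in> (\<Union>\<gamma>\<in>G. {g \<in> S. g \<gamma> = 0})"
    using g by blast
qed

lemma not_countable_cofinality_if_zero_sets_small:
  assumes S: "S \<subseteq> l1_space \<Gamma>" "uncountable S" "|S| \<le>o |\<Gamma>|"
    and Z: "\<And>\<gamma>. \<gamma> \<in> \<Gamma> \<Longrightarrow> |{g \<in> S. g \<gamma> = 0}| <o |S|"
  shows "\<not> countable_cofinality S"
proof
  assume "countable_cofinality S"
  then obtain N :: "nat \<Rightarrow> _" where N: "S \<subseteq> (\<Union>n. N n)" "\<And>n. |N n| <o |S|"
    unfolding countable_cofinality_def by blast
  obtain n0 where n0: "uncountable (N n0)"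
    using uncountable_UN_nat[OF S(2) N(1)] by blast
  have "|N n0| \<le>o |\<Gamma>|"
    using ordLess_imp_ordLeq[OF N(2)] S(3) ordLeq_transitive by blast
  then obtain G where G: "G \<subseteq> \<Gamma>" "|N n0| =o |G|"
    using iffD1[OF internalize_card_of_ordLeq2] by blast
  have G_unc: "uncountable G"
    using G(2) n0 countable_ordLeq ordIso_iff_ordLeq by blast
  have zero_set_le: "\<exists>n. |{g \<in> S. g \<gamma> = 0}| \<le>o |N n|" if "\<gamma> \<in> G" for \<gamma>
    using that G(1) by (intro countable_cover_member_ordLeq[OF S(2) N(1)] Z) blast
  define nf where "nf \<gamma> = (SOME n. |{g \<in> S. g \<gamma> = 0}| \<le>o |N n| )" for \<gamma>
  have nf: "|{g \<in> S. g \<gamma> = 0}| \<le>o |N (nf \<gamma>)|" if "\<gamma> \<in> G" for \<gamma>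
    unfolding nf_def by (rule someI_ex[OF zero_set_le[OF that]])
  have "\<exists>k. uncountable {\<gamma> \<in> G. nf \<gamma> = k}"
    by (rule uncountable_UN_nat[OF G_unc]) blast
  then obtain k where k: "uncountable {\<gamma> \<in> G. nf \<gamma> = k}"
    by blast
  define Gk where "Gk = {\<gamma> \<in> G. nf \<gamma> = k}"
  have "|\<Union>\<gamma>\<in>Gk. {g \<in> S. g \<gamma> = 0}| \<le>o |Gk \<times> N k|"
    using nf by (intro card_of_UN_ordLeq_Times) (auto simp: Gk_def)
  then have "|S| \<le>o |Gk \<times> N k|"
    using card_of_mono1[OF l1_space_subset_UN_zero_sets[OF S(1) k[folded Gk_def]]] ordLeq_transitive
    by blast
  moreover have "|Gk| <o |S|"
    using G(2) N(2)[of n0] ordIso_ordLess_trans ordIso_symmetric card_of_subset_ordLess[of Gk G]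
    unfolding Gk_def by blast
  then have "|Gk \<times> N k| <o |S|"
    using S(2) countable_finite N(2) by (intro card_of_Times_ordLess_infinite) auto
  ultimately show False
    using ordLeq_ordLess_trans ordLess_irreflexive by blast
qed

definition heavy_ratios :: "('a \<Rightarrow> real) set \<Rightarrow> real set" where
  "heavy_ratios S = {r. \<forall>U. |U| <o |S| \<longrightarrow> \<not> |tail_heavy S U r| <o |S|}"

lemma zero_in_heavy_ratios: "0 \<in> heavy_ratios S"
proof -
  have "tail_heavy S U 0 = S" for U
    by (auto simp: tail_heavy_def mass_nonneg)
  then show ?thesis
    by (simp add: heavy_ratios_def ordLess_irreflexive)
qed

lemma heavy_ratios_downward:
  assumes "r \<in> heavy_ratios S" "r' \<le> r"
  shows "r' \<in> heavy_ratios S"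
proof -
  have "tail_heavy S U r \<subseteq> tail_heavy S U r'" for U
  proof
    fix g assume "g \<in> tail_heavy S U r"
    then show "g \<in> tail_heavy S U r'"
      using mult_right_mono[OF assms(2) mass_nonneg[of UNIV g]] by (simp add: tail_heavy_def)
  qed
  then show ?thesis
    using assms(1) card_of_subset_ordLess unfolding heavy_ratios_def by blast
qed

lemma heavy_ratios_le_1:
  assumes "S \<subseteq> l1_space \<Gamma>" "infinite S" "r \<in> heavy_ratios S"
  shows "r \<le> 1"
proof (rule ccontr)
  assume r: "\<not> r \<le> 1"
  have "tail_heavy S {} r \<subseteq> {\<lambda>x. 0}"
  proof
    fix g assume "g \<in> tail_heavy S {} r"
    then have g: "g \<in> l1_space \<Gamma>" "r * mass UNIV g \<le> mass UNIV g"
      using assms(1) by (auto simp: tail_heavy_def)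
    then have "(r - 1) * mass UNIV g \<le> 0"
      by (simp add: algebra_simps)
    then have "mass UNIV g \<le> 0"
      using r by (simp add: mult_le_0_iff)
    then have "g x = 0" for x
      using abs_le_mass[OF g(1), of x UNIV] by simp
    then show "g \<in> {\<lambda>x. 0}"
      by auto
  qed
  then have "|tail_heavy S {} r| <o |S|"
    using assms(2) finite_subset by (intro card_of_finite_ordLess_infinite) auto
  moreover have "|{} :: 'a set| <o |S|"
    using assms(2) by (intro card_of_finite_ordLess_infinite) auto
  moreover have "\<forall>U. |U| <o |S| \<longrightarrow> \<not> |tail_heavy S U r| <o |S|"
    using assms(3) by (simp add: heavy_ratios_def)
  ultimately show False
    by blast
qed

lemma exists_large_not_linearly_dense_subset_if_ratio_pos:
  assumes S: "S \<subseteq> l1_space \<Gamma>" "uncountable S" and \<gamma>: "\<gamma> \<in> \<Gamma>"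
    and pos: "0 < Sup (heavy_ratios S)"
  shows "\<exists>\<Lambda>\<subseteq>S. |\<Lambda>| =o |S| \<and> \<not> linearly_dense (l1_space \<Gamma>) (l1_dist \<Gamma>) \<Lambda>"
proof -
  let ?R = "heavy_ratios S" and ?m = "Sup (heavy_ratios S)"
  have S_inf: "infinite S"
    using S(2) countable_finite by blast
  have bdd: "bdd_above ?R"
    using heavy_ratios_le_1[OF S(1) S_inf] by (intro bdd_aboveI)
  have ne: "?R \<noteq> {}"
    using zero_in_heavy_ratios by blast
  \<comment> \<open>chosen so that \<open>4 * \<delta> = ?m - \<delta>\<close> is a heavy ratio and \<open>6 * \<delta> = ?m + \<delta>\<close> is not\<close>
  define \<delta> where "\<delta> = ?m / 5"
  have \<delta>: "0 < \<delta>" "\<delta> \<le> 1"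
    using pos cSup_least[OF ne heavy_ratios_le_1[OF S(1) S_inf]] by (auto simp: \<delta>_def)
  obtain r where r: "r \<in> ?R" "?m - \<delta> < r"
    using less_cSupD[OF ne, of "?m - \<delta>"] \<delta>(1) by auto
  have heavy: "4 * \<delta> \<in> ?R"
    using heavy_ratios_downward[OF r(1), of "4 * \<delta>"] r(2) by (simp add: \<delta>_def)
  have "6 * \<delta> \<notin> ?R"
    using cSup_upper[OF _ bdd, of "6 * \<delta>"] \<delta>(1) by (auto simp: \<delta>_def)
  then obtain U0 where U0: "|U0| <o |S|" "|tail_heavy S U0 (6 * \<delta>)| <o |S|"
    unfolding heavy_ratios_def by blast
  have U: "|insert \<gamma> U0| <o |S|"
    using card_of_Un_ordLess_infinite[OF S_inf _ U0(1), of "{\<gamma>}"] S_inf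
    by (simp add: card_of_finite_ordLess_infinite)
  have light: "|tail_heavy S (insert \<gamma> U0) (6 * \<delta>)| <o |S|"
    using tail_heavy_antimono[OF S(1) subset_insertI] U0(2) by (rule card_of_subset_ordLess)
  show ?thesis
    using heavy unfolding heavy_ratios_def
    by (intro exists_large_not_linearly_dense_subset_if_threshold[OF S \<gamma> _ U \<delta> _ light]) auto
qed

lemma vanishing_subset_if_ratios_zero:
  assumes S: "S \<subseteq> l1_space \<Gamma>" "infinite S" "\<not> countable_cofinality S"
    and zero: "\<And>r. 0 < r \<Longrightarrow> r \<notin> heavy_ratios S"
  obtains V T where "|V| <o |S|" "T \<subseteq> S" "\<not> |T| <o |S|" "\<And>g x. g \<in> T \<Longrightarrow> x \<notin> V \<Longrightarrow> g x = 0"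
proof -
  have "\<exists>U. |U| <o |S| \<and> |tail_heavy S U (inverse (Suc n))| <o |S|" for n :: nat
    using zero[of "inverse (Suc n)"] unfolding heavy_ratios_def by auto
  then obtain Uf where Uf: "\<And>n. |Uf n| <o |S|" "\<And>n. |tail_heavy S (Uf n) (inverse (Suc n))| <o |S|"
    by metis
  define V where "V = (\<Union>n. Uf n)"
  define T where "T = S - (\<Union>n. tail_heavy S (Uf n) (inverse (Suc n)))"
  have "|V| <o |S|"
    unfolding V_def using S(3) Uf(1) by (rule card_of_UN_ordLess_if_not_countable_cofinality)
  moreover have "\<not> |T| <o |S|"
    unfolding T_def using S(2,3) Uf(2) by (rule card_of_Diff_UN_not_ordLess)
  moreover have "g x = 0" if g: "g \<in> T" and x: "x \<notin> V" for g x
  proof (rule ccontr)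
    assume "g x \<noteq> 0"
    then obtain n where "g \<in> tail_heavy S V (inverse (Suc n))"
      using tail_heavy_if_nonzero_outside[OF _ S(1) x] g unfolding T_def by blast
    then have "g \<in> tail_heavy S (Uf n) (inverse (Suc n))"
      using tail_heavy_antimono[OF S(1), of "Uf n" V] by (auto simp: V_def)
    then show False
      using g unfolding T_def by blast
  qed
  moreover have "T \<subseteq> S"
    unfolding T_def by blast
  ultimately show ?thesis
    using that by blast
qed

lemma exists_large_not_linearly_dense_subset_if_zero_sets_small:
  assumes S: "S \<subseteq> l1_space \<Gamma>" "uncountable S" "|S| \<le>o |\<Gamma>|"
    and Z: "\<And>\<gamma>. \<gamma> \<in> \<Gamma> \<Longrightarrow> |{g \<in> S. g \<gamma> = 0}| <o |S|"
  shows "\<exists>\<Lambda>\<subseteq>S. |\<Lambda>| =o |S| \<and> \<not> linearly_dense (l1_space \<Gamma>) (l1_dist \<Gamma>) \<Lambda>"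
proof (cases "0 < Sup (heavy_ratios S)")
  case True
  have "\<Gamma> \<noteq> {}"
    using S(2,3) countable_ordLeq by fastforce
  then obtain \<gamma> where "\<gamma> \<in> \<Gamma>"
    by blast
  then show ?thesis
    using exists_large_not_linearly_dense_subset_if_ratio_pos[OF S(1,2) _ True] by blast
next
  case False
  have S_inf: "infinite S"
    using S(2) countable_finite by blast
  have "r \<notin> heavy_ratios S" if "0 < r" for r
    using False that cSup_upper[of r "heavy_ratios S"]
      heavy_ratios_le_1[OF S(1) S_inf] by (force intro: bdd_aboveI)
  then obtain V T where V: "|V| <o |S|" and T: "T \<subseteq> S" "\<not> |T| <o |S|"
    and vanish: "\<And>g x. g \<in> T \<Longrightarrow> x \<notin> V \<Longrightarrow> g x = 0"
    using vanishing_subset_if_ratios_zero[OF S(1) S_inf not_countable_cofinality_if_zero_sets_small[OF S Z]]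
    by blast
  have "\<not> \<Gamma> \<subseteq> V"
    using V S(3) card_of_mono1 ordLeq_ordLess_trans ordLess_ordLeq_trans ordLess_irreflexive by metis
  then obtain \<gamma> where \<gamma>: "\<gamma> \<in> \<Gamma>" "\<gamma> \<notin> V"
    by blast
  have "T \<subseteq> {g \<in> S. g \<gamma> = 0}"
    using T(1) vanish \<gamma>(2) by blast
  then have "\<not> |{g \<in> S. g \<gamma> = 0}| <o |S|"
    using T(2) card_of_subset_ordLess by blast
  then show ?thesis
    using Z[OF \<gamma>(1)] by blast
qed

lemma exists_large_not_linearly_dense_subset:
  assumes "uncountable \<Gamma>" "S \<subseteq> l1_space \<Gamma>" "|S| \<le>o |\<Gamma>|"
  shows "\<exists>\<Lambda>\<subseteq>S. |\<Lambda>| =o |S| \<and> \<not> linearly_dense (l1_space \<Gamma>) (l1_dist \<Gamma>) \<Lambda>"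
proof (cases "|S| <o |\<Gamma>|")
  case True
  then show ?thesis
    using not_linearly_dense_if_card_ordLess[OF assms(1,2) True] card_of_refl by blast
next
  case False
  then have "|\<Gamma>| \<le>o |S|"
    using not_ordLess_iff_ordLeq[OF card_of_Well_order card_of_Well_order] by blast
  then have S_unc: "uncountable S"
    using assms(1) countable_ordLeq by blast
  show ?thesis
  proof (cases "\<exists>\<gamma>\<in>\<Gamma>. \<not> |{g \<in> S. g \<gamma> = 0}| <o |S|")
    case True
    then obtain \<gamma> where \<gamma>: "\<gamma> \<in> \<Gamma>" "\<not> |{g \<in> S. g \<gamma> = 0}| <o |S|"
      by blast
    show ?thesis
    proof (intro exI conjI)
      show "{g \<in> S. g \<gamma> = 0} \<subseteq> S"
        by blast
      then show "|{g \<in> S. g \<gamma> = 0}| =o |S|"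
        using \<gamma>(2) by (rule card_of_subset_ordIso)
      show "\<not> linearly_dense (l1_space \<Gamma>) (l1_dist \<Gamma>) {g \<in> S. g \<gamma> = 0}"
        using assms(2) by (intro not_linearly_dense_if_vanishing[OF _ \<gamma>(1)]) auto
    qed
  next
    case False
    then show ?thesis
      using assms(2,3) S_unc by (intro exists_large_not_linearly_dense_subset_if_zero_sets_small) auto
  qed
qed

theorem theorem3p12:
  fixes \<Gamma> :: "'a set"
  assumes "uncountable \<Gamma>"
  shows "\<not> (\<exists>S. overcomplete (l1_space \<Gamma>) (l1_dist \<Gamma>) S)"
proof
  assume "\<exists>S. overcomplete (l1_space \<Gamma>) (l1_dist \<Gamma>) S"
  then obtain S where S: "S \<subseteq> l1_space \<Gamma>" "card_eq_dens (l1_space \<Gamma>) (l1_dist \<Gamma>) S"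
    and dense: "\<And>\<Lambda>. \<Lambda> \<subseteq> S \<Longrightarrow> |\<Lambda>| =o |S| \<Longrightarrow> linearly_dense (l1_space \<Gamma>) (l1_dist \<Gamma>) \<Lambda>"
    unfolding overcomplete_def by blast
  have "|S| \<le>o |\<Gamma>|"
    using assms countable_finite S(2) by (intro card_of_le_dens_l1_space) auto
  then obtain \<Lambda> where "\<Lambda> \<subseteq> S" "|\<Lambda>| =o |S|" "\<not> linearly_dense (l1_space \<Gamma>) (l1_dist \<Gamma>) \<Lambda>"
    using exists_large_not_linearly_dense_subset[OF assms S(1)] by blast
  with dense show False
    by blast
qed

end
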